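(* Let $\mathcal{S}=(\mathscr{X},\nabla_{\mathcal{S}})$ and $\mathcal{T}=(\mathscr{Y},\nabla_{\mathcal{T}})$ be non-commutative spacetimes and let $f:\mathcal{S}\to\mathcal{T}$ be a geometric map that has a left adjoint $f_!:\mathscr{Y}\to\mathscr{X}$ (i.e. $f_!(y)\le x$ iff $y\le f(x)$). Then $f$ is logical if and only if $f_!(f(b)\otimes\nabla_{\mathcal{T}}a)=b\otimes\nabla_{\mathcal{S}}f_!(a)$ for all $a\in\mathscr{Y}$ and $b\in\mathscr{X}$.
   Context: A monoidal poset is a poset with a monoid structure whose multiplication is monotone in each argument. A quantale is a monoidal poset with all joins whose multiplication distributes over arbitrary joins in each argument. A monotone map between monoidal posets is oplax monoidal if $f(e)\le e$ and $f(a\otimes b)\le f(a)\otimes f(b)$, and strict monoidal if $f(e)=e$ and $f(a\otimes b)=f(a)\otimes f(b)$. A non-commutative spacetime is a pair $(\mathscr{X},\nabla)$ with $\mathscr{X}$ a quantale and $\nabla:\mathscr{X}\to\mathscr{X}$ join preserving and oplax monoidal. For such $\mathcal{S}$, $\nabla$ has a right adjoint $\Box$, and the implication of $\mathcal{S}$ is $a\to_{\mathcal{S}}b=\Box(a\Rightarrow b)$, where $\Rightarrow$ is the right adjoint of $a\otimes(-)$ in $\mathscr{X}$; equivalently $a\otimes\nabla b\le c$ iff $b\le a\to_{\mathcal{S}}c$. A geometric map $f:\mathcal{S}\to\mathcal{T}$ is a join-preserving strict monoidal map $f:\mathscr{X}\to\mathscr{Y}$ with $f\nabla_{\mathcal{S}}=\nabla_{\mathcal{T}}f$;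 it is logical if moreover $f(a\to_{\mathcal{S}}b)=f(a)\to_{\mathcal{T}}f(b)$ for all $a,b\in\mathscr{X}$. *)

theory Defs
  imports Main
begin

definition quantale :: "('a::complete_lattice \<Rightarrow> 'a \<Rightarrow> 'a) \<Rightarrow> 'a \<Rightarrow> bool" where
  "quantale m e \<longleftrightarrow>
     (\<forall>a b c. m (m a b) c = m a (m b c)) \<and>
     (\<forall>a. m e a = a) \<and> (\<forall>a. m a e = a) \<and>
     (\<forall>a b c. b \<le> c \<longrightarrow> m a b \<le> m a c \<and> m b a \<le> m c a) \<and>
     (\<forall>a A. m a (Sup A) = Sup ((\<lambda>x. m a x) ` A)) \<and>
     (\<forall>a A. m (Sup A) a = Sup ((\<lambda>x. m x a) ` A))"

definition join_preserving :: "('a::complete_lattice \<Rightarrow> 'b::complete_lattice) \<Rightarrow> bool" where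
  "join_preserving f \<longleftrightarrow> (\<forall>A. f (Sup A) = Sup (f ` A))"

definition oplax_monoidal ::
  "('a::complete_lattice \<Rightarrow> 'a \<Rightarrow> 'a) \<Rightarrow> 'a \<Rightarrow> ('b::complete_lattice \<Rightarrow> 'b \<Rightarrow> 'b) \<Rightarrow> 'b \<Rightarrow> ('a \<Rightarrow> 'b) \<Rightarrow> bool" where
  "oplax_monoidal mX eX mY eY f \<longleftrightarrow> mono f \<and> f eX \<le> eY \<and> (\<forall>a b. f (mX a b) \<le> mY (f a) (f b))"

definition strict_monoidal ::
  "('a::complete_lattice \<Rightarrow> 'a \<Rightarrow> 'a) \<Rightarrow> 'a \<Rightarrow> ('b::complete_lattice \<Rightarrow> 'b \<Rightarrow> 'b) \<Rightarrow> 'b \<Rightarrow> ('a \<Rightarrow> 'b) \<Rightarrow> bool" where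
  "strict_monoidal mX eX mY eY f \<longleftrightarrow> mono f \<and> f eX = eY \<and> (\<forall>a b. f (mX a b) = mY (f a) (f b))"

definition nc_spacetime :: "('a::complete_lattice \<Rightarrow> 'a \<Rightarrow> 'a) \<Rightarrow> 'a \<Rightarrow> ('a \<Rightarrow> 'a) \<Rightarrow> bool" where
  "nc_spacetime m e n \<longleftrightarrow> quantale m e \<and> join_preserving n \<and> oplax_monoidal m e m e n"

definition box :: "('a::complete_lattice \<Rightarrow> 'a) \<Rightarrow> 'a \<Rightarrow> 'a" where
  "box n a = Sup {b. n b \<le> a}"

definition rres :: "('a::complete_lattice \<Rightarrow> 'a \<Rightarrow> 'a) \<Rightarrow> 'a \<Rightarrow> 'a \<Rightarrow> 'a" where
  "rres m a b = Sup {c. m a c \<le> b}"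

definition st_imp :: "('a::complete_lattice \<Rightarrow> 'a \<Rightarrow> 'a) \<Rightarrow> ('a \<Rightarrow> 'a) \<Rightarrow> 'a \<Rightarrow> 'a \<Rightarrow> 'a" where
  "st_imp m n a b = box n (rres m a b)"

definition geometric_map ::
  "('a::complete_lattice \<Rightarrow> 'a \<Rightarrow> 'a) \<Rightarrow> 'a \<Rightarrow> ('a \<Rightarrow> 'a) \<Rightarrow>
   ('b::complete_lattice \<Rightarrow> 'b \<Rightarrow> 'b) \<Rightarrow> 'b \<Rightarrow> ('b \<Rightarrow> 'b) \<Rightarrow> ('a \<Rightarrow> 'b) \<Rightarrow> bool" where
  "geometric_map mX eX nX mY eY nY f \<longleftrightarrow>
     join_preserving f \<and> strict_monoidal mX eX mY eY f \<and> (\<forall>a. f (nX a) = nY (f a))"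

definition logical_map ::
  "('a::complete_lattice \<Rightarrow> 'a \<Rightarrow> 'a) \<Rightarrow> 'a \<Rightarrow> ('a \<Rightarrow> 'a) \<Rightarrow>
   ('b::complete_lattice \<Rightarrow> 'b \<Rightarrow> 'b) \<Rightarrow> 'b \<Rightarrow> ('b \<Rightarrow> 'b) \<Rightarrow> ('a \<Rightarrow> 'b) \<Rightarrow> bool" where
  "logical_map mX eX nX mY eY nY f \<longleftrightarrow>
     geometric_map mX eX nX mY eY nY f \<and>
     (\<forall>a b. f (st_imp mX nX a b) = st_imp mY nY (f a) (f b))"

end

theory Submission
  imports Defs
begin

text \<open>
  A geometric map always satisfies \<open>f (a \<rightarrow> b) \<le> f a \<rightarrow> f b\<close> and the Frobenius-type
  inequality \<open>f\<^sub>! (f b \<otimes> \<nabla> a) \<le> b \<otimes> \<nabla> (f\<^sub>! a)\<close>. The implication is right adjoint to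
  \<open>a \<otimes> \<nabla> (-)\<close> and \<open>f\<^sub>!\<close> is left adjoint to \<open>f\<close>; transposing along these adjunctions turns
  the reverse of either inequality into the reverse of the other, so one is an equality
  exactly when the other is.
\<close>

lemma join_preserving_mono:
  assumes "join_preserving g"
  shows "mono g"
proof
  fix x y :: 'a
  assume "x \<le> y"
  have "g (Sup {x, y}) = Sup (g ` {x, y})"
    using assms unfolding join_preserving_def by blast
  then have "g y = sup (g x) (g y)"
    using \<open>x \<le> y\<close> by (simp add: sup_absorb2)
  then show "g x \<le> g y"
    by (metis sup.cobounded1)
qed

lemma join_preserving_galois:
  assumes "join_preserving g"
  shows "g c \<le> b \<longleftrightarrow> c \<le> Sup {x. g x \<le> b}"
proof
  assume "c \<le> Sup {x. g x \<le> b}"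
  then have "g c \<le> g (Sup {x. g x \<le> b})"
    by (rule monoD[OF join_preserving_mono[OF assms]])
  also have "\<dots> = Sup (g ` {x. g x \<le> b})"
    using assms by (simp add: join_preserving_def)
  also have "\<dots> \<le> b" by (auto intro: Sup_least)
  finally show "g c \<le> b" .
qed (auto intro: Sup_upper)

lemma quantale_join_preserving_left:
  assumes "quantale m e"
  shows "join_preserving (m a)"
  using assms by (simp add: quantale_def join_preserving_def)

lemma st_imp_galois:
  assumes "join_preserving (m a)" and "join_preserving n"
  shows "m a (n c) \<le> b \<longleftrightarrow> c \<le> st_imp m n a b"
proof -
  have "m a (n c) \<le> b \<longleftrightarrow> n c \<le> rres m a b"
    unfolding rres_def by (rule join_preserving_galois[OF assms(1)])
  also have "\<dots> \<longleftrightarrow> c \<le> st_imp m n a b"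
    unfolding st_imp_def box_def by (rule join_preserving_galois[OF assms(2)])
  finally show ?thesis .
qed

lemma nc_spacetime_st_imp_galois:
  assumes "nc_spacetime m e n"
  shows "m a (n c) \<le> b \<longleftrightarrow> c \<le> st_imp m n a b"
proof (rule st_imp_galois)
  show "join_preserving (m a)"
    using assms by (auto simp: nc_spacetime_def intro: quantale_join_preserving_left)
  show "join_preserving n"
    using assms by (simp add: nc_spacetime_def)
qed

locale geometric_map_left_adjoint =
  fixes mX :: "'a::complete_lattice \<Rightarrow> 'a \<Rightarrow> 'a" and eX :: 'a and nX :: "'a \<Rightarrow> 'a"
    and mY :: "'b::complete_lattice \<Rightarrow> 'b \<Rightarrow> 'b" and eY :: 'b and nY :: "'b \<Rightarrow> 'b"
    and f :: "'a \<Rightarrow> 'b" and fl :: "'b \<Rightarrow> 'a"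
  assumes spacetime_X: "nc_spacetime mX eX nX"
    and spacetime_Y: "nc_spacetime mY eY nY"
    and geometric: "geometric_map mX eX nX mY eY nY f"
    and adjoint: "fl y \<le> x \<longleftrightarrow> y \<le> f x"
begin

lemma f_mult: "f (mX a b) = mY (f a) (f b)"
  and f_nabla: "f (nX a) = nY (f a)"
  and f_mono: "mono f"
  using geometric by (auto simp: geometric_map_def strict_monoidal_def)

lemma le_f_fl: "y \<le> f (fl y)"
  using adjoint by blast

lemma imp_galois_X: "mX a (nX c) \<le> b \<longleftrightarrow> c \<le> st_imp mX nX a b"
  using spacetime_X by (rule nc_spacetime_st_imp_galois)

lemma imp_galois_Y: "mY a (nY c) \<le> b \<longleftrightarrow> c \<le> st_imp mY nY a b"
  using spacetime_Y by (rule nc_spacetime_st_imp_galois)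

lemma f_st_imp_le: "f (st_imp mX nX a b) \<le> st_imp mY nY (f a) (f b)"
proof -
  have "mX a (nX (st_imp mX nX a b)) \<le> b"
    using imp_galois_X by blast
  then have "f (mX a (nX (st_imp mX nX a b))) \<le> f b"
    by (rule monoD[OF f_mono])
  then show ?thesis
    by (simp add: f_mult f_nabla imp_galois_Y)
qed

lemma fl_frobenius_le: "fl (mY (f b) (nY a)) \<le> mX b (nX (fl a))"
proof -
  have "nY a \<le> nY (f (fl a))"
    using spacetime_Y le_f_fl
    by (auto simp: nc_spacetime_def oplax_monoidal_def intro: monoD)
  then have "mY (f b) (nY a) \<le> f (mX b (nX (fl a)))"
    using spacetime_Y by (auto simp: nc_spacetime_def quantale_def f_mult f_nabla)
  then show ?thesis
    using adjoint by blast
qed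

lemma fl_frobenius_if_logical:
  assumes "logical_map mX eX nX mY eY nY f"
  shows "fl (mY (f b) (nY a)) = mX b (nX (fl a))"
proof (rule antisym[OF fl_frobenius_le])
  let ?c = "fl (mY (f b) (nY a))"
  have "a \<le> st_imp mY nY (f b) (f ?c)"
    using le_f_fl imp_galois_Y by blast
  also have "\<dots> = f (st_imp mX nX b ?c)"
    using assms by (simp add: logical_map_def)
  finally have "fl a \<le> st_imp mX nX b ?c"
    using adjoint by blast
  then show "mX b (nX (fl a)) \<le> ?c"
    using imp_galois_X by blast
qed

lemma logical_if_fl_frobenius:
  assumes frobenius: "\<And>a b. fl (mY (f b) (nY a)) = mX b (nX (fl a))"
  shows "logical_map mX eX nX mY eY nY f"
proof -
  have "st_imp mY nY (f a) (f b) \<le> f (st_imp mX nX a b)" for a b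
  proof -
    let ?y = "st_imp mY nY (f a) (f b)"
    have "fl (mY (f a) (nY ?y)) \<le> b"
      using imp_galois_Y adjoint by blast
    then have "fl ?y \<le> st_imp mX nX a b"
      by (simp add: frobenius imp_galois_X)
    then show ?thesis
      using adjoint by blast
  qed
  then show ?thesis
    unfolding logical_map_def using geometric f_st_imp_le by (blast intro: antisym)
qed

end

theorem theorem5p12:
  fixes mX :: "'a::complete_lattice \<Rightarrow> 'a \<Rightarrow> 'a" and eX :: 'a and nX :: "'a \<Rightarrow> 'a"
    and mY :: "'b::complete_lattice \<Rightarrow> 'b \<Rightarrow> 'b" and eY :: 'b and nY :: "'b \<Rightarrow> 'b"
    and f :: "'a \<Rightarrow> 'b" and fl :: "'b \<Rightarrow> 'a"
  assumes "nc_spacetime mX eX nX"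
    and "nc_spacetime mY eY nY"
    and "geometric_map mX eX nX mY eY nY f"
    and "\<forall>x y. fl y \<le> x \<longleftrightarrow> y \<le> f x"
  shows "logical_map mX eX nX mY eY nY f \<longleftrightarrow>
         (\<forall>a b. fl (mY (f b) (nY a)) = mX b (nX (fl a)))"
proof -
  interpret geometric_map_left_adjoint mX eX nX mY eY nY f fl
    using assms by unfold_locales blast+
  show ?thesis
    using fl_frobenius_if_logical logical_if_fl_frobenius by blast
qed

end
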